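(* In the setting below, let $E$ and $E'$ be two bases of $q$-singular vectors indexed by the same totally ordered set $I$, and define $\Delta_{E,E'}:V^{\overline S}\to V^{\overline S}$ by $\Delta_{E,E'}(x+\bar r)=x+\theta(\delta_{E,E'}(x))+\bar r$ for $x\in V$, $\bar r\in\overline S$. Then $\Delta_{E,E'}$ is a bijective $K$-linear map fixing $\overline S$ elementwise, and $q_E^{\overline S,\overline T}(v)=q_{E'}^{\overline S,\overline T}(\Delta_{E,E'}(v))$ for all $v\in V^{\overline S}$; in particular $q_E^{\overline S,\overline T}$ and $q_{E'}^{\overline S,\overline T}$ are isomorphic.
   Context: Setting: $K$ division ring, $(\sigma,\varepsilon)$ admissible pair ($\sigma$ anti-automorphism, $\varepsilon^\sigma\varepsilon=1$, $t^{\sigma^2}=\varepsilon t\varepsilon^{-1}$). $K_{\sigma,\varepsilon}=\{t-t^\sigma\varepsilon\}$, $\overline K=K/K_{\sigma,\varepsilon}$, $\bar t$ class of $t$, $\bar t\circ\lambda=\overline{\lambda^\sigma t\lambda}$; $\{t:t=-t^\sigma\varepsilon\}/K_{\sigma,\varepsilon}$ is a right $K$-vector space under $\circ$. $q:V\to\overline K/\overline R$ ($V$ right $K$-vector space) is a non-trivial generalized $(\sigma,\varepsilon)$-quadratic form: $\overline R$ is a $\circ$-stable subgroup, $q(x\lambda)=q(x)\circ\lambda$ with $(\bar t+\overline R)\circ\lambda=\bar t\circ\lambda+\overline R$, and a trace-valued $(\sigma,\varepsilon)$-sesquilinear $f$ ($f(x\lambda,y\mu)=\lambda^\sigma f(x,y)\mu$,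 $f(y,x)=f(x,y)^\sigma\varepsilon$, $f(x,x)\in\{t+t^\sigma\varepsilon\}$) satisfies $q(x+y)=q(x)+q(y)+(\overline{f(x,y)}+\overline R)$; $q$ not identically $\overline R$ (then $\overline R$ is a $K$-subspace of the vector space above). $q$-singular: $q(x)=\overline R$. For a basis $E=(e_i)_{i\in I}$ of $q$-singular vectors, $g_E(\sum e_i\lambda_i,\sum e_j\mu_j)=\sum_{i<j}\lambda_i^\sigma f(e_i,e_j)\mu_j$, and $\delta_{E,E'}(x)=\overline{g_E(x,x)}-\overline{g_{E'}(x,x)}\in\overline R$. $\overline R=\overline S\oplus\overline T$ as $K$-vector spaces, $\theta:\overline R\to\overline S$ the projection along $\overline T$. $V^{\overline S}=V\oplus\overline S$ and $q_E^{\overline S,\overline T}(x+\bar r)=\overline{g_E(x,x)}+\bar r+\overline T\in\overline K/\overline T$. *)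

theory Defs
  imports Main
begin

text \<open>Quotients such as K/K_{sigma,eps}, K/R etc. are handled through
representatives: a subgroup of the quotient is represented by its preimage in K,
and equality of classes is congruence modulo that preimage.\<close>

definition mod_eq :: "'k::ab_group_add set \<Rightarrow> 'k \<Rightarrow> 'k \<Rightarrow> bool" where
  "mod_eq A a b \<longleftrightarrow> a - b \<in> A"

definition admissible_pair :: "('k::division_ring \<Rightarrow> 'k) \<Rightarrow> 'k \<Rightarrow> bool" where
  "admissible_pair \<sigma> \<epsilon> \<longleftrightarrow>
     bij \<sigma> \<and> (\<forall>a b. \<sigma> (a + b) = \<sigma> a + \<sigma> b) \<and> (\<forall>a b. \<sigma> (a * b) = \<sigma> b * \<sigma> a)
     \<and> \<sigma> \<epsilon> * \<epsilon> = 1 \<and> (\<forall>t. \<sigma> (\<sigma> t) = \<epsilon> * t * inverse \<epsilon>)"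

definition Kse :: "('k::division_ring \<Rightarrow> 'k) \<Rightarrow> 'k \<Rightarrow> 'k set" where
  "Kse \<sigma> \<epsilon> = {t - \<sigma> t * \<epsilon> | t. True}"

definition Ktr :: "('k::division_ring \<Rightarrow> 'k) \<Rightarrow> 'k \<Rightarrow> 'k set" where
  "Ktr \<sigma> \<epsilon> = {t + \<sigma> t * \<epsilon> | t. True}"

text \<open>Preimage in K of a circ-stable subgroup of Kbar = K / K_{sigma,eps}
  (equivalently: of a K-subspace when contained in the vector space of the context).\<close>
definition circ_stable_subgroup :: "('k::division_ring \<Rightarrow> 'k) \<Rightarrow> 'k \<Rightarrow> 'k set \<Rightarrow> bool" where
  "circ_stable_subgroup \<sigma> \<epsilon> A \<longleftrightarrow>
     Kse \<sigma> \<epsilon> \<subseteq> A \<and> 0 \<in> A \<and> (\<forall>a\<in>A. \<forall>b\<in>A. a + b \<in> A) \<and> (\<forall>a\<in>A. - a \<in> A)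
     \<and> (\<forall>a\<in>A. \<forall>l. \<sigma> l * a * l \<in> A)"

definition right_vector_space :: "('v::ab_group_add \<Rightarrow> 'k::division_ring \<Rightarrow> 'v) \<Rightarrow> bool" where
  "right_vector_space smul \<longleftrightarrow>
     (\<forall>x. smul x 1 = x) \<and> (\<forall>x a b. smul (smul x a) b = smul x (a * b))
     \<and> (\<forall>x y a. smul (x + y) a = smul x a + smul y a)
     \<and> (\<forall>x a b. smul x (a + b) = smul x a + smul x b)"

definition is_basis :: "('v::ab_group_add \<Rightarrow> 'k::division_ring \<Rightarrow> 'v) \<Rightarrow> ('i \<Rightarrow> 'v) \<Rightarrow> bool" where
  "is_basis smul E \<longleftrightarrow>
     (\<forall>x. \<exists>!c. finite {i. c i \<noteq> 0} \<and> x = (\<Sum>i\<in>{i. c i \<noteq> 0}. smul (E i) (c i)))"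

definition coord :: "('v::ab_group_add \<Rightarrow> 'k::division_ring \<Rightarrow> 'v) \<Rightarrow> ('i \<Rightarrow> 'v) \<Rightarrow> 'v \<Rightarrow> 'i \<Rightarrow> 'k" where
  "coord smul E x = (THE c. finite {i. c i \<noteq> 0} \<and> x = (\<Sum>i\<in>{i. c i \<noteq> 0}. smul (E i) (c i)))"

definition trace_valued_sesq ::
  "('k::division_ring \<Rightarrow> 'k) \<Rightarrow> 'k \<Rightarrow> ('v::ab_group_add \<Rightarrow> 'k \<Rightarrow> 'v) \<Rightarrow> ('v \<Rightarrow> 'v \<Rightarrow> 'k) \<Rightarrow> bool" where
  "trace_valued_sesq \<sigma> \<epsilon> smul f \<longleftrightarrow>
     (\<forall>x y z. f (x + y) z = f x z + f y z) \<and> (\<forall>x y z. f x (y + z) = f x y + f x z)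
     \<and> (\<forall>x y l m. f (smul x l) (smul y m) = \<sigma> l * f x y * m)
     \<and> (\<forall>x y. f y x = \<sigma> (f x y) * \<epsilon>)
     \<and> (\<forall>x. f x x \<in> Ktr \<sigma> \<epsilon>)"

text \<open>Generalized (sigma,eps)-quadratic form q : V -> Kbar/Rbar, given by a
  representative-valued function q : V -> K; R is the preimage of Rbar in K.
  Non-triviality: q is not identically Rbar.\<close>
definition gen_quadratic_form ::
  "('k::division_ring \<Rightarrow> 'k) \<Rightarrow> 'k \<Rightarrow> ('v::ab_group_add \<Rightarrow> 'k \<Rightarrow> 'v) \<Rightarrow> 'k set
   \<Rightarrow> ('v \<Rightarrow> 'v \<Rightarrow> 'k) \<Rightarrow> ('v \<Rightarrow> 'k) \<Rightarrow> bool" where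
  "gen_quadratic_form \<sigma> \<epsilon> smul R f q \<longleftrightarrow>
     circ_stable_subgroup \<sigma> \<epsilon> R \<and> trace_valued_sesq \<sigma> \<epsilon> smul f
     \<and> (\<forall>x l. mod_eq R (q (smul x l)) (\<sigma> l * q x * l))
     \<and> (\<forall>x y. mod_eq R (q (x + y)) (q x + q y + f x y))
     \<and> (\<exists>x. q x \<notin> R)"

definition gE ::
  "('k::division_ring \<Rightarrow> 'k) \<Rightarrow> ('v::ab_group_add \<Rightarrow> 'k \<Rightarrow> 'v) \<Rightarrow> ('v \<Rightarrow> 'v \<Rightarrow> 'k)
   \<Rightarrow> ('i::linorder \<Rightarrow> 'v) \<Rightarrow> 'v \<Rightarrow> 'v \<Rightarrow> 'k" where
  "gE \<sigma> smul f E x y =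
     (let cx = coord smul E x; cy = coord smul E y in
      \<Sum>(i, j)\<in>{(i, j). cx i \<noteq> 0 \<and> cy j \<noteq> 0 \<and> i < j}. \<sigma> (cx i) * f (E i) (E j) * cy j)"

definition deltaEE ::
  "('k::division_ring \<Rightarrow> 'k) \<Rightarrow> ('v::ab_group_add \<Rightarrow> 'k \<Rightarrow> 'v) \<Rightarrow> ('v \<Rightarrow> 'v \<Rightarrow> 'k)
   \<Rightarrow> ('i::linorder \<Rightarrow> 'v) \<Rightarrow> ('i \<Rightarrow> 'v) \<Rightarrow> 'v \<Rightarrow> 'k" where
  "deltaEE \<sigma> smul f E E' x = gE \<sigma> smul f E x x - gE \<sigma> smul f E' x x"

text \<open>V^S = V (+) Sbar: pairs (x, s) with s a representative in S; equality of
  elements of V^S, addition and right scalar multiplication.\<close>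
definition VS :: "'k::division_ring set \<Rightarrow> ('v \<times> 'k) set" where
  "VS S = {(x, s). s \<in> S}"

definition VS_eq :: "('k::division_ring \<Rightarrow> 'k) \<Rightarrow> 'k \<Rightarrow> ('v \<times> 'k) \<Rightarrow> ('v \<times> 'k) \<Rightarrow> bool" where
  "VS_eq \<sigma> \<epsilon> v w \<longleftrightarrow> fst v = fst w \<and> mod_eq (Kse \<sigma> \<epsilon>) (snd v) (snd w)"

definition VS_add :: "('v::ab_group_add \<times> 'k::division_ring) \<Rightarrow> ('v \<times> 'k) \<Rightarrow> ('v \<times> 'k)" where
  "VS_add v w = (fst v + fst w, snd v + snd w)"

definition VS_smul ::
  "('k::division_ring \<Rightarrow> 'k) \<Rightarrow> ('v \<Rightarrow> 'k \<Rightarrow> 'v) \<Rightarrow> ('v \<times> 'k) \<Rightarrow> 'k \<Rightarrow> ('v \<times> 'k)" where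
  "VS_smul \<sigma> smul v l = (smul (fst v) l, \<sigma> l * snd v * l)"

definition DeltaEE ::
  "('k::division_ring \<Rightarrow> 'k) \<Rightarrow> ('v::ab_group_add \<Rightarrow> 'k \<Rightarrow> 'v) \<Rightarrow> ('v \<Rightarrow> 'v \<Rightarrow> 'k)
   \<Rightarrow> ('k \<Rightarrow> 'k) \<Rightarrow> ('i::linorder \<Rightarrow> 'v) \<Rightarrow> ('i \<Rightarrow> 'v) \<Rightarrow> ('v \<times> 'k) \<Rightarrow> ('v \<times> 'k)" where
  "DeltaEE \<sigma> smul f \<theta> E E' v = (fst v, \<theta> (deltaEE \<sigma> smul f E E' (fst v)) + snd v)"

text \<open>q_E^{S,T}(x + r) = g_E(x,x) + r + Tbar (representative; compare with mod_eq T)\<close>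
definition qEST ::
  "('k::division_ring \<Rightarrow> 'k) \<Rightarrow> ('v::ab_group_add \<Rightarrow> 'k \<Rightarrow> 'v) \<Rightarrow> ('v \<Rightarrow> 'v \<Rightarrow> 'k)
   \<Rightarrow> ('i::linorder \<Rightarrow> 'v) \<Rightarrow> ('v \<times> 'k) \<Rightarrow> 'k" where
  "qEST \<sigma> smul f E v = gE \<sigma> smul f E (fst v) (fst v) + snd v"

end

theory Submission
  imports Defs
begin

text \<open>Expanding \<open>q\<close> along a basis \<open>E\<close> of \<open>q\<close>-singular vectors shows that \<open>g_E(x,x)\<close>
  represents \<open>q(x)\<close> modulo \<open>R\<close>, and that \<open>x \<mapsto> g_E(x,x)\<close> is \<open>\<sigma>\<close>-quadratic with polar form
  \<open>f\<close> modulo \<open>K_{\<sigma>,\<epsilon>}\<close>: the diagonal terms vanish because singular vectors of a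
  non-trivial \<open>q\<close> are isotropic. Hence \<open>\<delta>_{E,E'}\<close> takes values in \<open>R\<close> and is additive and
  \<open>\<circ>\<close>-semilinear modulo \<open>K_{\<sigma>,\<epsilon>}\<close>, and so is \<open>\<theta> \<circ> \<delta>_{E,E'}\<close>, since a decomposition
  \<open>r = s + t\<close> is unique modulo \<open>S \<inter> T = K_{\<sigma>,\<epsilon>}\<close>. Thus \<open>\<Delta>_{E,E'}\<close> is a linear shear of
  \<open>V \<oplus> S\<close>, inverted by the shear with \<open>-\<theta>\<delta>\<close>, and \<open>q_E - q_{E'} \<circ> \<Delta> = \<delta> - \<theta>\<delta>\<close> lies
  in \<open>T\<close>.\<close>

lemma circ_stable_subgroup_zero: "circ_stable_subgroup \<sigma> \<epsilon> A \<Longrightarrow> 0 \<in> A"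
  unfolding circ_stable_subgroup_def by blast

lemma circ_stable_subgroup_add:
  "circ_stable_subgroup \<sigma> \<epsilon> A \<Longrightarrow> a \<in> A \<Longrightarrow> b \<in> A \<Longrightarrow> a + b \<in> A"
  unfolding circ_stable_subgroup_def by blast

lemma circ_stable_subgroup_diff:
  "circ_stable_subgroup \<sigma> \<epsilon> A \<Longrightarrow> a \<in> A \<Longrightarrow> b \<in> A \<Longrightarrow> a - b \<in> A"
  unfolding circ_stable_subgroup_def by (metis diff_conv_add_uminus)

lemma circ_stable_subgroup_circ: "circ_stable_subgroup \<sigma> \<epsilon> A \<Longrightarrow> a \<in> A \<Longrightarrow> \<sigma> l * a * l \<in> A"
  unfolding circ_stable_subgroup_def by blast

lemma circ_stable_subgroup_Kse: "circ_stable_subgroup \<sigma> \<epsilon> A \<Longrightarrow> Kse \<sigma> \<epsilon> \<subseteq> A"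
  unfolding circ_stable_subgroup_def by blast

context
  fixes \<sigma> :: "'k::division_ring \<Rightarrow> 'k" and \<epsilon> :: 'k and R S T :: "'k set" and \<theta> :: "'k \<Rightarrow> 'k"
  assumes R: "circ_stable_subgroup \<sigma> \<epsilon> R"
    and S: "circ_stable_subgroup \<sigma> \<epsilon> S" and T: "circ_stable_subgroup \<sigma> \<epsilon> T"
    and ST: "S \<inter> T = Kse \<sigma> \<epsilon>"
    and \<theta>: "\<forall>r\<in>R. \<theta> r \<in> S \<and> r - \<theta> r \<in> T"
begin

lemma projection_unique:
  assumes "a \<in> R" "c \<in> S" "a - c \<in> T"
  shows "\<theta> a - c \<in> Kse \<sigma> \<epsilon>"
proof -
  have "\<theta> a - c \<in> S" using \<theta> assms(1,2) by (blast intro: circ_stable_subgroup_diff[OF S])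
  moreover have "\<theta> a - c = (a - c) - (a - \<theta> a)" by (simp add: algebra_simps)
  then have "\<theta> a - c \<in> T" using \<theta> assms(1,3) by (metis circ_stable_subgroup_diff[OF T])
  ultimately show ?thesis using ST by blast
qed

lemma projection_cong:
  assumes "a \<in> R" "b \<in> R" "a - b \<in> Kse \<sigma> \<epsilon>"
  shows "\<theta> a - \<theta> b \<in> Kse \<sigma> \<epsilon>"
proof (rule projection_unique)
  have "a - \<theta> b = (a - b) + (b - \<theta> b)" by simp
  then show "a - \<theta> b \<in> T" using \<theta> assms circ_stable_subgroup_Kse[OF T]
    by (metis circ_stable_subgroup_add[OF T] subsetD)
qed (use \<theta> assms in auto)

lemma projection_add:
  assumes "a \<in> R" "b \<in> R"
  shows "\<theta> (a + b) - (\<theta> a + \<theta> b) \<in> Kse \<sigma> \<epsilon>"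
proof (rule projection_unique)
  have "a + b - (\<theta> a + \<theta> b) = (a - \<theta> a) + (b - \<theta> b)" by (simp add: algebra_simps)
  then show "a + b - (\<theta> a + \<theta> b) \<in> T" using \<theta> assms by (metis circ_stable_subgroup_add[OF T])
qed (use \<theta> assms in \<open>auto intro: circ_stable_subgroup_add[OF R] circ_stable_subgroup_add[OF S]\<close>)

lemma projection_circ:
  assumes "a \<in> R"
  shows "\<theta> (\<sigma> l * a * l) - \<sigma> l * \<theta> a * l \<in> Kse \<sigma> \<epsilon>"
proof (rule projection_unique)
  have "\<sigma> l * a * l - \<sigma> l * \<theta> a * l = \<sigma> l * (a - \<theta> a) * l" by (simp add: algebra_simps)
  then show "\<sigma> l * a * l - \<sigma> l * \<theta> a * l \<in> T" using \<theta> assms by (metis circ_stable_subgroup_circ[OF T])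
qed (use \<theta> assms in \<open>auto intro: circ_stable_subgroup_circ[OF R] circ_stable_subgroup_circ[OF S]\<close>)

lemma projection_zero: "\<theta> 0 \<in> Kse \<sigma> \<epsilon>"
  using projection_unique[of 0 0] circ_stable_subgroup_zero[OF R] circ_stable_subgroup_zero[OF S]
    circ_stable_subgroup_zero[OF T] by simp

end

locale admissible_sigma =
  fixes \<sigma> :: "'k::division_ring \<Rightarrow> 'k" and \<epsilon> :: 'k
  assumes admissible: "admissible_pair \<sigma> \<epsilon>"
begin

lemma sigma_add: "\<sigma> (a + b) = \<sigma> a + \<sigma> b"
  using admissible by (simp add: admissible_pair_def)

lemma sigma_mult: "\<sigma> (a * b) = \<sigma> b * \<sigma> a"
  using admissible by (simp add: admissible_pair_def)

lemma sigma_sigma: "\<sigma> (\<sigma> t) = \<epsilon> * t * inverse \<epsilon>"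
  using admissible by (simp add: admissible_pair_def)

lemma epsilon_nonzero: "\<epsilon> \<noteq> 0"
  using admissible by (auto simp: admissible_pair_def)

lemma sigma_zero [simp]: "\<sigma> 0 = 0"
  using sigma_add[of 0 0] by simp

lemma sigma_one [simp]: "\<sigma> 1 = 1"
proof -
  obtain a where "\<sigma> a = 1" using admissible by (metis admissible_pair_def bij_pointE)
  then show ?thesis using sigma_mult[of a 1] by simp
qed

lemma sigma_minus: "\<sigma> (- a) = - \<sigma> a"
  using sigma_add[of "- a" a] by (simp add: eq_neg_iff_add_eq_0)

lemma sigma_diff: "\<sigma> (a - b) = \<sigma> a - \<sigma> b"
  using sigma_add[of a "- b"] by (simp add: sigma_minus)

lemma sigma_sum: "\<sigma> (sum g A) = (\<Sum>i\<in>A. \<sigma> (g i))"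
  by (induction A rule: infinite_finite_induct) (auto simp: sigma_add)

lemma Kse_mem: "a - \<sigma> a * \<epsilon> \<in> Kse \<sigma> \<epsilon>"
  by (auto simp: Kse_def)

lemma VS_eq_iff: "VS_eq \<sigma> \<epsilon> v w \<longleftrightarrow> fst v = fst w \<and> snd v - snd w \<in> Kse \<sigma> \<epsilon>"
  by (simp add: VS_eq_def mod_eq_def)

lemma VS_eq_refl: "VS_eq \<sigma> \<epsilon> v v"
  using Kse_mem[of 0] by (simp add: VS_eq_iff)

lemma Kse_add:
  assumes "a \<in> Kse \<sigma> \<epsilon>" "b \<in> Kse \<sigma> \<epsilon>"
  shows "a + b \<in> Kse \<sigma> \<epsilon>"
proof -
  obtain t u where ab: "a = t - \<sigma> t * \<epsilon>" "b = u - \<sigma> u * \<epsilon>"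
    using assms by (auto simp: Kse_def)
  have "a + b = (t + u) - \<sigma> (t + u) * \<epsilon>"
    unfolding ab by (simp add: sigma_add algebra_simps)
  then show ?thesis by (simp add: Kse_mem)
qed

lemma Kse_diff:
  assumes "a \<in> Kse \<sigma> \<epsilon>" "b \<in> Kse \<sigma> \<epsilon>"
  shows "a - b \<in> Kse \<sigma> \<epsilon>"
proof -
  obtain t u where ab: "a = t - \<sigma> t * \<epsilon>" "b = u - \<sigma> u * \<epsilon>"
    using assms by (auto simp: Kse_def)
  have "a - b = (t - u) - \<sigma> (t - u) * \<epsilon>"
    unfolding ab by (simp add: sigma_diff algebra_simps)
  then show ?thesis by (simp add: Kse_mem)
qed

end

locale right_space =
  fixes smul :: "'v::ab_group_add \<Rightarrow> 'k::division_ring \<Rightarrow> 'v"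
  assumes vector_space: "right_vector_space smul"
begin

lemma smul_one [simp]: "smul x 1 = x"
  using vector_space by (simp add: right_vector_space_def)

lemma smul_smul: "smul (smul x a) b = smul x (a * b)"
  using vector_space by (simp add: right_vector_space_def)

lemma smul_add_left: "smul (x + y) a = smul x a + smul y a"
  using vector_space by (simp add: right_vector_space_def)

lemma smul_add_right: "smul x (a + b) = smul x a + smul x b"
  using vector_space by (simp add: right_vector_space_def)

lemma smul_zero_right [simp]: "smul x 0 = 0"
  using smul_add_right[of x 0 0] by simp

lemma smul_zero_left [simp]: "smul 0 a = 0"
  using smul_add_left[of 0 0 a] by simp

lemma smul_sum_left: "smul (sum g A) l = (\<Sum>i\<in>A. smul (g i) l)"
  by (induction A rule: infinite_finite_induct) (auto simp: smul_add_left)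

definition supp :: "('i \<Rightarrow> 'k) \<Rightarrow> 'i set" where
  "supp c = {i. c i \<noteq> 0}"

definition lincomb :: "('i \<Rightarrow> 'v) \<Rightarrow> ('i \<Rightarrow> 'k) \<Rightarrow> 'v" where
  "lincomb E c = (\<Sum>i\<in>supp c. smul (E i) (c i))"

lemma lincomb_superset:
  "finite B \<Longrightarrow> supp c \<subseteq> B \<Longrightarrow> (\<Sum>i\<in>B. smul (E i) (c i)) = lincomb E c"
  unfolding lincomb_def by (rule sum.mono_neutral_right) (auto simp: supp_def)

lemma is_basis_ex1:
  "is_basis smul E \<Longrightarrow> \<exists>!c. finite {i. c i \<noteq> 0} \<and> x = (\<Sum>i\<in>{i. c i \<noteq> 0}. smul (E i) (c i))"
  unfolding is_basis_def by (rule spec)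

lemma coord_spec:
  assumes "is_basis smul E"
  shows "finite (supp (coord smul E x)) \<and> x = lincomb E (coord smul E x)"
  using theI'[OF is_basis_ex1[OF assms, of x]] unfolding coord_def[symmetric] supp_def lincomb_def .

lemma coord_unique:
  assumes "is_basis smul E" "finite (supp c)" "x = lincomb E c"
  shows "coord smul E x = c"
  unfolding coord_def
  by (rule the1_equality[OF is_basis_ex1[OF assms(1)]])
    (use assms(2,3) in \<open>simp add: supp_def lincomb_def\<close>)

lemma coord_add:
  assumes "is_basis smul E"
  shows "coord smul E (x + y) = (\<lambda>i. coord smul E x i + coord smul E y i)"
proof -
  let ?c = "coord smul E x" and ?d = "coord smul E y"
  let ?B = "supp ?c \<union> supp ?d"
  have fin: "finite ?B" using coord_spec[OF assms] by auto
  have sub: "supp (\<lambda>i. ?c i + ?d i) \<subseteq> ?B" by (auto simp: supp_def)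
  have "lincomb E (\<lambda>i. ?c i + ?d i) = (\<Sum>i\<in>?B. smul (E i) (?c i)) + (\<Sum>i\<in>?B. smul (E i) (?d i))"
    using lincomb_superset[OF fin sub] by (simp add: smul_add_right sum.distrib)
  also have "\<dots> = x + y"
    using lincomb_superset[OF fin, of ?c E] lincomb_superset[OF fin, of ?d E] coord_spec[OF assms]
    by auto
  finally show ?thesis using coord_unique[OF assms] fin sub by (metis finite_subset)
qed

lemma coord_smul:
  assumes "is_basis smul E"
  shows "coord smul E (smul x l) = (\<lambda>i. coord smul E x i * l)"
proof -
  let ?c = "coord smul E x"
  have fin: "finite (supp ?c)" using coord_spec[OF assms] by auto
  have sub: "supp (\<lambda>i. ?c i * l) \<subseteq> supp ?c" by (auto simp: supp_def)
  have "lincomb E (\<lambda>i. ?c i * l) = smul (lincomb E ?c) l"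
    using lincomb_superset[OF fin sub] by (simp add: lincomb_def smul_sum_left smul_smul)
  also have "\<dots> = smul x l" using coord_spec[OF assms, of x] by simp
  finally show ?thesis using coord_unique[OF assms] fin sub by (metis finite_subset)
qed

lemma coord_zero: "is_basis smul E \<Longrightarrow> coord smul E 0 = (\<lambda>i. 0)"
  using coord_unique[of E "\<lambda>i. 0" 0] by (simp add: supp_def lincomb_def)

end

locale quadratic_space = admissible_sigma \<sigma> \<epsilon> + right_space smul
  for \<sigma> :: "'k::division_ring \<Rightarrow> 'k" and \<epsilon> :: 'k and smul :: "'v::ab_group_add \<Rightarrow> 'k \<Rightarrow> 'v" +
  fixes f :: "'v \<Rightarrow> 'v \<Rightarrow> 'k" and q :: "'v \<Rightarrow> 'k" and R :: "'k set"
  assumes quadratic_form: "gen_quadratic_form \<sigma> \<epsilon> smul R f q"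
begin

lemma sesquilinear: "trace_valued_sesq \<sigma> \<epsilon> smul f"
  using quadratic_form by (simp add: gen_quadratic_form_def)

lemma f_add_left: "f (x + y) z = f x z + f y z"
  using sesquilinear unfolding trace_valued_sesq_def by blast

lemma f_add_right: "f x (y + z) = f x y + f x z"
  using sesquilinear unfolding trace_valued_sesq_def by blast

lemma f_smul: "f (smul x l) (smul y m) = \<sigma> l * f x y * m"
  using sesquilinear unfolding trace_valued_sesq_def by blast

lemma f_swap: "f y x = \<sigma> (f x y) * \<epsilon>"
  using sesquilinear unfolding trace_valued_sesq_def by blast

lemma f_zero_left [simp]: "f 0 y = 0"
  using f_add_left[of 0 0 y] by simp

lemma f_zero_right [simp]: "f x 0 = 0"
  using f_add_right[of x 0 0] by simp

lemma f_smul_right: "f x (smul y m) = f x y * m"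
  using f_smul[of x 1 y m] by simp

lemma f_sum_left: "f (sum g A) z = (\<Sum>i\<in>A. f (g i) z)"
  by (induction A rule: infinite_finite_induct) (auto simp: f_add_left)

lemma f_sum_right: "f z (sum g A) = (\<Sum>i\<in>A. f z (g i))"
  by (induction A rule: infinite_finite_induct) (auto simp: f_add_right)

lemma f_lincomb_lincomb:
  "f (\<Sum>i\<in>B. smul (E i) (c i)) (\<Sum>j\<in>B. smul (E j) (d j))
     = (\<Sum>i\<in>B. \<Sum>j\<in>B. \<sigma> (c i) * f (E i) (E j) * d j)"
  by (simp add: f_sum_left f_sum_right f_smul) (rule sum.swap)

lemma sigma_swap_f: "\<sigma> (\<sigma> a * f x y * b) * \<epsilon> = \<sigma> b * f y x * a"
proof -
  have "\<sigma> (\<sigma> a * f x y * b) * \<epsilon> = \<sigma> b * (\<sigma> (f x y) * \<epsilon>) * a * (inverse \<epsilon> * \<epsilon>)"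
    by (simp add: sigma_mult sigma_sigma mult.assoc)
  also have "\<dots> = \<sigma> b * f y x * a" using epsilon_nonzero by (simp add: f_swap[of y x])
  finally show ?thesis .
qed

lemma circ_stable_R: "circ_stable_subgroup \<sigma> \<epsilon> R"
  using quadratic_form by (simp add: gen_quadratic_form_def)

lemmas R_add = circ_stable_subgroup_add[OF circ_stable_R]
   and R_diff = circ_stable_subgroup_diff[OF circ_stable_R]
   and R_circ = circ_stable_subgroup_circ[OF circ_stable_R]

lemma q_smul_mod: "q (smul x l) - \<sigma> l * q x * l \<in> R"
  using quadratic_form by (simp add: gen_quadratic_form_def mod_eq_def)

lemma q_add_mod: "q (x + y) - (q x + q y + f x y) \<in> R"
  using quadratic_form by (simp add: gen_quadratic_form_def mod_eq_def)

lemma q_smul_singular: "q e \<in> R \<Longrightarrow> q (smul e l) \<in> R"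
  using q_smul_mod[of e l] R_circ[of "q e" l] R_add by fastforce

text \<open>Otherwise \<open>q(e + e\<lambda>) \<equiv> f(e,e)\<lambda>\<close> would exhaust \<open>K\<close> modulo \<open>R\<close>, and \<open>q\<close> would be trivial.\<close>

lemma singular_isotropic:
  assumes "q e \<in> R"
  shows "f e e = 0"
proof (rule ccontr)
  assume nz: "f e e \<noteq> 0"
  have multiple: "f e e * l \<in> R" for l
  proof -
    have "e + smul e l = smul e (1 + l)" by (simp add: smul_add_right)
    then have "q (e + smul e l) \<in> R" using q_smul_singular[OF assms] by simp
    from R_diff[OF this q_add_mod[of e "smul e l"]]
    have sum_in_R: "q e + q (smul e l) + f e (smul e l) \<in> R" by (simp add: algebra_simps)
    have "f e (smul e l) = (q e + q (smul e l) + f e (smul e l)) - (q e + q (smul e l))" by simp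
    also have "\<dots> \<in> R" using R_diff[OF sum_in_R R_add[OF assms q_smul_singular[OF assms]]] .
    finally have "f e (smul e l) \<in> R" .
    then show ?thesis by (simp add: f_smul_right)
  qed
  have "x \<in> R" for x using multiple[of "inverse (f e e) * x"] nz by (simp add: mult.assoc[symmetric])
  then show False using quadratic_form by (auto simp: gen_quadratic_form_def)
qed

definition gsum :: "('i::linorder \<Rightarrow> 'v) \<Rightarrow> ('i \<Rightarrow> 'k) \<Rightarrow> ('i \<Rightarrow> 'k) \<Rightarrow> 'i set \<Rightarrow> 'k" where
  "gsum E c d B = (\<Sum>i\<in>B. \<Sum>j\<in>B. if i < j then \<sigma> (c i) * f (E i) (E j) * d j else 0)"

lemma gE_eq_gsum:
  assumes "is_basis smul E" "finite B"
    and "supp (coord smul E x) \<subseteq> B" "supp (coord smul E y) \<subseteq> B"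
  shows "gE \<sigma> smul f E x y = gsum E (coord smul E x) (coord smul E y) B"
proof -
  let ?c = "coord smul E x" and ?d = "coord smul E y"
  let ?t = "\<lambda>(i, j). if i < j then \<sigma> (?c i) * f (E i) (E j) * ?d j else 0"
  have "gE \<sigma> smul f E x y = (\<Sum>(i, j)\<in>{(i, j). ?c i \<noteq> 0 \<and> ?d j \<noteq> 0 \<and> i < j}. ?t (i, j))"
    unfolding gE_def Let_def by (intro sum.cong refl) auto
  also have "\<dots> = sum ?t (B \<times> B)"
    using assms by (intro sum.mono_neutral_cong_left) (auto simp: supp_def split: if_splits)
  also have "\<dots> = gsum E ?c ?d B"
    by (simp add: gsum_def sum.cartesian_product)
  finally show ?thesis .
qed

lemma gsum_insert_max:
  assumes "finite B" "\<forall>i\<in>B. i < m"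
  shows "gsum E c d (insert m B) = gsum E c d B + (\<Sum>i\<in>B. \<sigma> (c i) * f (E i) (E m) * d m)"
proof -
  have "m \<notin> B" using assms(2) by auto
  moreover have "(\<Sum>j\<in>B. if m < j then \<sigma> (c m) * f (E m) (E j) * d j else 0) = 0"
    using assms(2) by (intro sum.neutral) (auto dest: less_asym)
  ultimately show ?thesis
    using assms by (simp add: gsum_def sum.distrib)
qed

lemma gsum_smul: "gsum E (\<lambda>i. c i * l) (\<lambda>i. c i * l) B = \<sigma> l * gsum E c c B * l"
proof -
  have "(if i < j then \<sigma> (c i * l) * f (E i) (E j) * (c j * l) else 0)
     = \<sigma> l * (if i < j then \<sigma> (c i) * f (E i) (E j) * c j else 0) * l" for i j
    by (simp add: sigma_mult mult.assoc)
  then show ?thesis by (simp only: gsum_def sum_distrib_left sum_distrib_right)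
qed

lemma gsum_add:
  "gsum E (\<lambda>i. c i + d i) (\<lambda>i. c i + d i) B = gsum E c c B + gsum E d d B + gsum E c d B + gsum E d c B"
  by (simp add: gsum_def sigma_add algebra_simps sum.distrib[symmetric] if_distrib cong: if_cong)

lemma gsum_polar:
  assumes "\<forall>i\<in>B. f (E i) (E i) = 0"
  shows "gsum E c d B + \<sigma> (gsum E d c B) * \<epsilon> = (\<Sum>i\<in>B. \<Sum>j\<in>B. \<sigma> (c i) * f (E i) (E j) * d j)"
proof -
  let ?t = "\<lambda>i j. \<sigma> (c i) * f (E i) (E j) * d j"
  have "\<sigma> (if i < j then \<sigma> (d i) * f (E i) (E j) * c j else 0) * \<epsilon>
      = (if i < j then ?t j i else 0)" for i j
    by (simp add: sigma_swap_f)
  then have "\<sigma> (gsum E d c B) * \<epsilon> = (\<Sum>i\<in>B. \<Sum>j\<in>B. if i < j then ?t j i else 0)"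
    by (simp only: gsum_def sigma_sum sum_distrib_right)
  also have "\<dots> = (\<Sum>i\<in>B. \<Sum>j\<in>B. if j < i then ?t i j else 0)"
    by (rule sum.swap)
  finally have "gsum E c d B + \<sigma> (gsum E d c B) * \<epsilon>
      = (\<Sum>i\<in>B. \<Sum>j\<in>B. (if i < j then ?t i j else 0) + (if j < i then ?t i j else 0))"
    by (simp add: gsum_def sum.distrib)
  also have "\<dots> = (\<Sum>i\<in>B. \<Sum>j\<in>B. ?t i j)"
    using assms by (intro sum.cong refl) (auto simp: not_less_iff_gr_or_eq)
  finally show ?thesis .
qed

lemma q_lincomb_mod_gsum:
  assumes "finite B" "\<forall>i. q (E i) \<in> R"
  shows "q (\<Sum>i\<in>B. smul (E i) (c i)) - gsum E c c B \<in> R"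
  using assms(1)
proof (induction B rule: finite_linorder_max_induct)
  case empty
  have "q 0 - \<sigma> 0 * q 0 * 0 \<in> R" using q_smul_mod[of 0 0] by simp
  then show ?case by (simp add: gsum_def)
next
  case (insert m B)
  let ?s = "\<Sum>i\<in>B. smul (E i) (c i)" and ?t = "smul (E m) (c m)"
  have "f ?s ?t = (\<Sum>i\<in>B. \<sigma> (c i) * f (E i) (E m) * c m)"
    by (simp add: f_sum_left f_smul)
  then have "q (?s + ?t) - gsum E c c (insert m B)
      = (q (?s + ?t) - (q ?s + q ?t + f ?s ?t)) + (q ?s - gsum E c c B) + q ?t"
    using insert by (simp add: gsum_insert_max algebra_simps)
  also have "\<dots> \<in> R"
    using R_add[OF R_add[OF q_add_mod insert.IH] q_smul_singular] assms(2) by blast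
  finally have "q (?s + ?t) - gsum E c c (insert m B) \<in> R" .
  moreover have "m \<notin> B" using insert.hyps(2) by blast
  ultimately show ?case using insert.hyps(1) by (simp add: add.commute)
qed

lemma q_mod_gE:
  assumes "is_basis smul E" "\<forall>i. q (E i) \<in> R"
  shows "q x - gE \<sigma> smul f E x x \<in> R"
proof -
  let ?c = "coord smul E x"
  have "finite (supp ?c)" and "x = lincomb E ?c" using coord_spec[OF assms(1)] by auto
  then show ?thesis
    using gE_eq_gsum[OF assms(1)] q_lincomb_mod_gsum[OF _ assms(2), of "supp ?c" ?c]
    by (simp add: lincomb_def)
qed

lemma gE_add_mod:
  assumes "is_basis smul E" "\<forall>i. q (E i) \<in> R"
  shows "gE \<sigma> smul f E (x + y) (x + y) - (gE \<sigma> smul f E x x + gE \<sigma> smul f E y y + f x y)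
    \<in> Kse \<sigma> \<epsilon>"
proof -
  let ?c = "coord smul E x" and ?d = "coord smul E y"
  let ?B = "supp ?c \<union> supp ?d"
  have fin: "finite ?B" using coord_spec[OF assms(1)] by auto
  have "supp (\<lambda>i. ?c i + ?d i) \<subseteq> ?B" by (auto simp: supp_def)
  then have gE_sum: "gE \<sigma> smul f E (x + y) (x + y) = gsum E (\<lambda>i. ?c i + ?d i) (\<lambda>i. ?c i + ?d i) ?B"
    using gE_eq_gsum[OF assms(1) fin] coord_add[OF assms(1)] by simp
  have "x = (\<Sum>i\<in>?B. smul (E i) (?c i))" "y = (\<Sum>i\<in>?B. smul (E i) (?d i))"
    using lincomb_superset[OF fin] coord_spec[OF assms(1)] by auto
  moreover have "\<forall>i\<in>?B. f (E i) (E i) = 0" using singular_isotropic assms(2) by blast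
  ultimately have "f x y = gsum E ?c ?d ?B + \<sigma> (gsum E ?d ?c ?B) * \<epsilon>"
    using gsum_polar[of ?B E ?c ?d] f_lincomb_lincomb[of E ?c ?B ?d] by simp
  then have "gE \<sigma> smul f E (x + y) (x + y) - (gE \<sigma> smul f E x x + gE \<sigma> smul f E y y + f x y)
      = gsum E ?d ?c ?B - \<sigma> (gsum E ?d ?c ?B) * \<epsilon>"
    using gE_sum gE_eq_gsum[OF assms(1) fin] gsum_add[of E ?c ?d ?B]
    by (auto simp: algebra_simps)
  then show ?thesis using Kse_mem by simp
qed

lemma gE_smul:
  assumes "is_basis smul E"
  shows "gE \<sigma> smul f E (smul x l) (smul x l) = \<sigma> l * gE \<sigma> smul f E x x * l"
proof -
  let ?c = "coord smul E x"
  have "finite (supp ?c)" using coord_spec[OF assms] by auto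
  moreover have "supp (\<lambda>i. ?c i * l) \<subseteq> supp ?c" by (auto simp: supp_def)
  ultimately show ?thesis using gE_eq_gsum[OF assms] coord_smul[OF assms] gsum_smul by simp
qed

lemma gE_zero: "is_basis smul E \<Longrightarrow> gE \<sigma> smul f E 0 0 = 0"
  by (simp add: gE_def coord_zero)

context
  fixes E E' :: "'i::linorder \<Rightarrow> 'v"
  assumes E: "is_basis smul E" and E_singular: "\<forall>i. q (E i) \<in> R"
    and E': "is_basis smul E'" and E'_singular: "\<forall>i. q (E' i) \<in> R"
begin

lemma deltaEE_in_R: "deltaEE \<sigma> smul f E E' x \<in> R"
proof -
  have "deltaEE \<sigma> smul f E E' x = (q x - gE \<sigma> smul f E' x x) - (q x - gE \<sigma> smul f E x x)"
    by (simp add: deltaEE_def)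
  also have "\<dots> \<in> R" by (rule R_diff[OF q_mod_gE[OF E' E'_singular] q_mod_gE[OF E E_singular]])
  finally show ?thesis .
qed

lemma deltaEE_add_mod:
  "deltaEE \<sigma> smul f E E' (x + y) - (deltaEE \<sigma> smul f E E' x + deltaEE \<sigma> smul f E E' y) \<in> Kse \<sigma> \<epsilon>"
proof -
  let ?g = "gE \<sigma> smul f E" and ?g' = "gE \<sigma> smul f E'"
  have "deltaEE \<sigma> smul f E E' (x + y) - (deltaEE \<sigma> smul f E E' x + deltaEE \<sigma> smul f E E' y)
      = (?g (x + y) (x + y) - (?g x x + ?g y y + f x y))
        - (?g' (x + y) (x + y) - (?g' x x + ?g' y y + f x y))"
    by (simp add: deltaEE_def algebra_simps)
  also have "\<dots> \<in> Kse \<sigma> \<epsilon>"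
    by (rule Kse_diff[OF gE_add_mod[OF E E_singular] gE_add_mod[OF E' E'_singular]])
  finally show ?thesis .
qed

lemma deltaEE_smul: "deltaEE \<sigma> smul f E E' (smul x l) = \<sigma> l * deltaEE \<sigma> smul f E E' x * l"
  by (simp add: deltaEE_def gE_smul[OF E] gE_smul[OF E'] algebra_simps)

lemma deltaEE_zero: "deltaEE \<sigma> smul f E E' 0 = 0"
  by (simp add: deltaEE_def gE_zero[OF E] gE_zero[OF E'])

end

end

locale basis_change = quadratic_space \<sigma> \<epsilon> smul f q R
  for \<sigma> :: "'k::division_ring \<Rightarrow> 'k" and \<epsilon> :: 'k and smul :: "'v::ab_group_add \<Rightarrow> 'k \<Rightarrow> 'v"
    and f :: "'v \<Rightarrow> 'v \<Rightarrow> 'k" and q :: "'v \<Rightarrow> 'k" and R :: "'k set" +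
  fixes S T :: "'k set" and \<theta> :: "'k \<Rightarrow> 'k" and E E' :: "'i::linorder \<Rightarrow> 'v"
  assumes S: "circ_stable_subgroup \<sigma> \<epsilon> S" and T: "circ_stable_subgroup \<sigma> \<epsilon> T"
    and S_inter_T: "S \<inter> T = Kse \<sigma> \<epsilon>"
    and projection: "\<forall>r\<in>R. \<theta> r \<in> S \<and> r - \<theta> r \<in> T"
    and E: "is_basis smul E" and E_singular: "\<forall>i. q (E i) \<in> R"
    and E': "is_basis smul E'" and E'_singular: "\<forall>i. q (E' i) \<in> R"
begin

abbreviation \<Delta> :: "'v \<times> 'k \<Rightarrow> 'v \<times> 'k" where
  "\<Delta> \<equiv> DeltaEE \<sigma> smul f \<theta> E E'"

abbreviation \<delta> :: "'v \<Rightarrow> 'k" where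
  "\<delta> \<equiv> deltaEE \<sigma> smul f E E'"

lemmas \<delta>_in_R = deltaEE_in_R[OF E E_singular E' E'_singular]
   and \<delta>_add_mod = deltaEE_add_mod[OF E E_singular E' E'_singular]
   and \<delta>_smul = deltaEE_smul[OF E E_singular E' E'_singular]
   and \<delta>_zero = deltaEE_zero[OF E E_singular E' E'_singular]

lemmas \<theta>_cong = projection_cong[OF circ_stable_R S T S_inter_T projection]
   and \<theta>_add = projection_add[OF circ_stable_R S T S_inter_T projection]
   and \<theta>_circ = projection_circ[OF circ_stable_R S T S_inter_T projection]
   and \<theta>_zero = projection_zero[OF circ_stable_R S T S_inter_T projection]

lemma \<theta>\<delta>_in_S: "\<theta> (\<delta> x) \<in> S"
  using projection \<delta>_in_R by blast

lemma DeltaEE_in_VS: "v \<in> VS S \<Longrightarrow> \<Delta> v \<in> VS S"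
  using circ_stable_subgroup_add[OF S \<theta>\<delta>_in_S] by (auto simp: VS_def DeltaEE_def)

lemma DeltaEE_VS_eq_iff: "VS_eq \<sigma> \<epsilon> (\<Delta> v) (\<Delta> w) \<longleftrightarrow> VS_eq \<sigma> \<epsilon> v w"
  by (auto simp: VS_eq_iff DeltaEE_def)

lemma DeltaEE_add: "VS_eq \<sigma> \<epsilon> (\<Delta> (VS_add v w)) (VS_add (\<Delta> v) (\<Delta> w))"
proof -
  let ?x = "fst v" and ?y = "fst w"
  have "\<theta> (\<delta> (?x + ?y)) - (\<theta> (\<delta> ?x) + \<theta> (\<delta> ?y))
      = (\<theta> (\<delta> (?x + ?y)) - \<theta> (\<delta> ?x + \<delta> ?y)) + (\<theta> (\<delta> ?x + \<delta> ?y) - (\<theta> (\<delta> ?x) + \<theta> (\<delta> ?y)))"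
    by simp
  also have "\<dots> \<in> Kse \<sigma> \<epsilon>"
    using Kse_add[OF \<theta>_cong[OF \<delta>_in_R R_add[OF \<delta>_in_R \<delta>_in_R] \<delta>_add_mod] \<theta>_add[OF \<delta>_in_R \<delta>_in_R]] .
  finally show ?thesis by (simp add: VS_eq_iff DeltaEE_def VS_add_def algebra_simps)
qed

lemma DeltaEE_smul: "VS_eq \<sigma> \<epsilon> (\<Delta> (VS_smul \<sigma> smul v l)) (VS_smul \<sigma> smul (\<Delta> v) l)"
  using \<theta>_circ[OF \<delta>_in_R, of l "fst v"]
  by (simp add: VS_eq_iff DeltaEE_def VS_smul_def \<delta>_smul algebra_simps)

lemma DeltaEE_surj: "w \<in> VS S \<Longrightarrow> \<exists>v\<in>VS S. \<Delta> v = w"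
  by (rule bexI[of _ "(fst w, snd w - \<theta> (\<delta> (fst w)))"])
    (auto simp: VS_def DeltaEE_def intro: circ_stable_subgroup_diff[OF S _ \<theta>\<delta>_in_S])

lemma DeltaEE_fixes_S: "VS_eq \<sigma> \<epsilon> (\<Delta> (0, s)) (0, s)"
  using \<theta>_zero by (simp add: VS_eq_iff DeltaEE_def \<delta>_zero)

lemma qEST_DeltaEE: "mod_eq T (qEST \<sigma> smul f E v) (qEST \<sigma> smul f E' (\<Delta> v))"
proof -
  have "qEST \<sigma> smul f E v - qEST \<sigma> smul f E' (\<Delta> v) = \<delta> (fst v) - \<theta> (\<delta> (fst v))"
    by (simp add: qEST_def DeltaEE_def deltaEE_def algebra_simps)
  then show ?thesis using projection \<delta>_in_R by (simp add: mod_eq_def)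
qed

end

theorem mainTheorem17:
  fixes \<sigma> :: "'k::division_ring \<Rightarrow> 'k" and \<epsilon> :: 'k
    and smul :: "'v::ab_group_add \<Rightarrow> 'k \<Rightarrow> 'v"
    and f :: "'v \<Rightarrow> 'v \<Rightarrow> 'k" and q :: "'v \<Rightarrow> 'k"
    and R S T :: "'k set" and \<theta> :: "'k \<Rightarrow> 'k"
    and E E' :: "'i::linorder \<Rightarrow> 'v"
  assumes adm: "admissible_pair \<sigma> \<epsilon>"
    and vs: "right_vector_space smul"
    and qf: "gen_quadratic_form \<sigma> \<epsilon> smul R f q"
    and S: "circ_stable_subgroup \<sigma> \<epsilon> S"
    and T: "circ_stable_subgroup \<sigma> \<epsilon> T"
    and RST: "R = {s + t | s t. s \<in> S \<and> t \<in> T}"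
    and ST: "S \<inter> T = Kse \<sigma> \<epsilon>"
    and \<theta>: "\<forall>r\<in>R. \<theta> r \<in> S \<and> r - \<theta> r \<in> T"
    and E: "is_basis smul E" and Esing: "\<forall>i. q (E i) \<in> R"
    and E': "is_basis smul E'" and E'sing: "\<forall>i. q (E' i) \<in> R"
  shows "(\<forall>v\<in>VS S. DeltaEE \<sigma> smul f \<theta> E E' v \<in> VS S)
    \<and> (\<forall>v\<in>VS S. \<forall>w\<in>VS S. VS_eq \<sigma> \<epsilon> v w \<longrightarrow>
          VS_eq \<sigma> \<epsilon> (DeltaEE \<sigma> smul f \<theta> E E' v) (DeltaEE \<sigma> smul f \<theta> E E' w))
    \<and> (\<forall>v\<in>VS S. \<forall>w\<in>VS S. VS_eq \<sigma> \<epsilon> (DeltaEE \<sigma> smul f \<theta> E E' (VS_add v w))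
          (VS_add (DeltaEE \<sigma> smul f \<theta> E E' v) (DeltaEE \<sigma> smul f \<theta> E E' w)))
    \<and> (\<forall>v\<in>VS S. \<forall>l. VS_eq \<sigma> \<epsilon> (DeltaEE \<sigma> smul f \<theta> E E' (VS_smul \<sigma> smul v l))
          (VS_smul \<sigma> smul (DeltaEE \<sigma> smul f \<theta> E E' v) l))
    \<and> (\<forall>v\<in>VS S. \<forall>w\<in>VS S. VS_eq \<sigma> \<epsilon> (DeltaEE \<sigma> smul f \<theta> E E' v) (DeltaEE \<sigma> smul f \<theta> E E' w)
          \<longrightarrow> VS_eq \<sigma> \<epsilon> v w)
    \<and> (\<forall>w\<in>VS S. \<exists>v\<in>VS S. VS_eq \<sigma> \<epsilon> (DeltaEE \<sigma> smul f \<theta> E E' v) w)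
    \<and> (\<forall>s\<in>S. VS_eq \<sigma> \<epsilon> (DeltaEE \<sigma> smul f \<theta> E E' (0, s)) (0, s))
    \<and> (\<forall>v\<in>VS S. mod_eq T (qEST \<sigma> smul f E v) (qEST \<sigma> smul f E' (DeltaEE \<sigma> smul f \<theta> E E' v)))"
proof -
  interpret basis_change \<sigma> \<epsilon> smul f q R S T \<theta> E E'
    by unfold_locales (fact adm vs qf S T ST \<theta> E Esing E' E'sing)+
  have "\<exists>v\<in>VS S. VS_eq \<sigma> \<epsilon> (\<Delta> v) w" if "w \<in> VS S" for w
    using DeltaEE_surj[OF that] VS_eq_refl by blast
  then show ?thesis
    by (simp add: DeltaEE_in_VS DeltaEE_VS_eq_iff DeltaEE_add DeltaEE_smul DeltaEE_fixes_S
        qEST_DeltaEE)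
qed

end
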